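(* Let $(S,K,I)$ be a split graph and let $v_1\ldots v_n$, with $n\geq 2$, be an induced path in the factor graph $\Phi(S)$. If $\sigma_{i,i+1}=1$ for some $i\in[n-1]$, then $i\in\{1,n-1\}$.
   Context: A split graph $(S,K,I)$ is a graph $S$ together with a fixed partition $V(S)=K\dot\cup I$, where $K$ is a clique and $I$ is an independent set. For a vertex $v$ of $S$, $N_v$ denotes its open neighborhood in $S$ and $d_v=|N_v|$; $\eta_{uv}=|N_u\cap N_v|$. The factor graph $\Phi(S)$ is the loopless multigraph with vertex set $I$ in which, for distinct $u,v\in I$, there is one edge joining $u$ and $v$ for each 2-switch of $S$ acting on $u$ and $v$ (a 2-switch replaces edges $ab,cd$ with $ac,bd$ when $ab,cd\in E(S)$ and $ac,bd\notin E(S)$); equivalently, the multiplicity of $uv$ is $\sigma_{uv}=(d_u-\eta_{uv})(d_v-\eta_{uv})$, and $u,v$ are adjacent iff $\sigma_{uv}>0$; $\sigma_{i,i+1}$ denotes $\sigma_{v_iv_{i+1}}$. An induced path in $\Phi(S)$ consists of distinct vertices with consecutive ones adjacent and no other pair adjacent (multiplicities ignored). *)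

theory Defs
  imports Main
begin

definition simple_graph :: "'a set \<Rightarrow> ('a \<Rightarrow> 'a \<Rightarrow> bool) \<Rightarrow> bool" where
  "simple_graph V E \<longleftrightarrow> finite V \<and> (\<forall>x y. E x y \<longrightarrow> E y x) \<and> (\<forall>x. \<not> E x x)
     \<and> (\<forall>x y. E x y \<longrightarrow> x \<in> V \<and> y \<in> V)"

definition split_graph :: "'a set \<Rightarrow> ('a \<Rightarrow> 'a \<Rightarrow> bool) \<Rightarrow> 'a set \<Rightarrow> 'a set \<Rightarrow> bool" where
  "split_graph V E K I \<longleftrightarrow> simple_graph V E \<and> V = K \<union> I \<and> K \<inter> I = {}
     \<and> (\<forall>x\<in>K. \<forall>y\<in>K. x \<noteq> y \<longrightarrow> E x y)
     \<and> (\<forall>x\<in>I. \<forall>y\<in>I. \<not> E x y)"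

definition nbhd :: "'a set \<Rightarrow> ('a \<Rightarrow> 'a \<Rightarrow> bool) \<Rightarrow> 'a \<Rightarrow> 'a set" where
  "nbhd V E v = {w \<in> V. E v w}"

definition deg :: "'a set \<Rightarrow> ('a \<Rightarrow> 'a \<Rightarrow> bool) \<Rightarrow> 'a \<Rightarrow> nat" where
  "deg V E v = card (nbhd V E v)"

definition eta :: "'a set \<Rightarrow> ('a \<Rightarrow> 'a \<Rightarrow> bool) \<Rightarrow> 'a \<Rightarrow> 'a \<Rightarrow> nat" where
  "eta V E u v = card (nbhd V E u \<inter> nbhd V E v)"

text \<open>Multiplicity of the edge uv in the factor graph.\<close>
definition sigma :: "'a set \<Rightarrow> ('a \<Rightarrow> 'a \<Rightarrow> bool) \<Rightarrow> 'a \<Rightarrow> 'a \<Rightarrow> nat" where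
  "sigma V E u v = (deg V E u - eta V E u v) * (deg V E v - eta V E u v)"

definition factor_adj :: "'a set \<Rightarrow> ('a \<Rightarrow> 'a \<Rightarrow> bool) \<Rightarrow> 'a set \<Rightarrow> 'a \<Rightarrow> 'a \<Rightarrow> bool" where
  "factor_adj V E I u v \<longleftrightarrow> u \<in> I \<and> v \<in> I \<and> u \<noteq> v \<and> sigma V E u v > 0"

definition factor_induced_path ::
  "'a set \<Rightarrow> ('a \<Rightarrow> 'a \<Rightarrow> bool) \<Rightarrow> 'a set \<Rightarrow> (nat \<Rightarrow> 'a) \<Rightarrow> nat \<Rightarrow> bool" where
  "factor_induced_path V E I p n \<longleftrightarrow>
     (\<forall>i\<in>{1..n}. p i \<in> I) \<and> inj_on p {1..n}
     \<and> (\<forall>i\<in>{1..n}. \<forall>j\<in>{1..n}.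
          factor_adj V E I (p i) (p j) \<longleftrightarrow> (j = i + 1 \<or> i = j + 1))"

end

theory Submission
  imports Defs
begin

text \<open>The multiplicity \<open>\<sigma>\<^sub>u\<^sub>v\<close> is the product of the numbers of private neighbours
  of \<open>u\<close> and of \<open>v\<close>. So \<open>\<sigma>\<^sub>u\<^sub>v = 0\<close> means that the two neighbourhoods are nested,
  and \<open>\<sigma>\<^sub>u\<^sub>v = 1\<close> means that \<open>u\<close> and \<open>v\<close> have exactly one private neighbour each,
  say \<open>a\<close> and \<open>b\<close>. If \<open>v\<^sub>i v\<^sub>i\<^sub>+\<^sub>1\<close> were an inner edge with \<open>\<sigma> = 1\<close> of an induced
  path, then \<open>v\<^sub>i\<^sub>-\<^sub>1\<close>, nested with \<open>v\<^sub>i\<^sub>+\<^sub>1\<close> but not with \<open>v\<^sub>i\<close>, sees \<open>b\<close> but not \<open>a\<close>;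
  symmetrically \<open>v\<^sub>i\<^sub>+\<^sub>2\<close> sees \<open>a\<close> but not \<open>b\<close>. Hence \<open>v\<^sub>i\<^sub>-\<^sub>1\<close> and \<open>v\<^sub>i\<^sub>+\<^sub>2\<close> are not nested,
  i.e. adjacent in \<open>\<Phi>(S)\<close>, contradicting inducedness.\<close>

definition nested :: "'a set \<Rightarrow> 'a set \<Rightarrow> bool" where
  "nested X Y \<longleftrightarrow> X \<subseteq> Y \<or> Y \<subseteq> X"

lemma nested_commute: "nested X Y \<longleftrightarrow> nested Y X"
  by (auto simp: nested_def)

lemma sigma_eq_card_Diff:
  assumes "finite V"
  shows "sigma V E u v = card (nbhd V E u - nbhd V E v) * card (nbhd V E v - nbhd V E u)"
proof -
  have fin: "finite (nbhd V E w)" for w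
    using assms by (simp add: nbhd_def)
  have "card (nbhd V E u - nbhd V E v) = deg V E u - eta V E u v"
    unfolding deg_def eta_def by (rule card_Diff_subset_Int) (use fin in blast)
  moreover have "card (nbhd V E v - nbhd V E u) = deg V E v - eta V E u v"
    unfolding deg_def eta_def by (subst Int_commute, rule card_Diff_subset_Int) (use fin in blast)
  ultimately show ?thesis
    by (simp add: sigma_def)
qed

lemma sigma_eq_0_iff_nested:
  assumes "finite V"
  shows "sigma V E u v = 0 \<longleftrightarrow> nested (nbhd V E u) (nbhd V E v)"
  using assms by (simp add: sigma_eq_card_Diff nested_def nbhd_def)

lemma sigma_eq_1_imp_singleton_Diffs:
  assumes "finite V" and "sigma V E u v = 1"
  obtains a b where "nbhd V E u - nbhd V E v = {a}" and "nbhd V E v - nbhd V E u = {b}"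
  using assms by (auto simp: sigma_eq_card_Diff card_1_singleton_iff)

lemma singleton_Diffs_nested_not_nested:
  assumes "X - Y = {a}" and "Y - X = {b}" and "nested Z Y" and "\<not> nested Z X"
  shows "b \<in> Z \<and> a \<notin> Z"
proof -
  have "Z \<subseteq> Y \<Longrightarrow> Z - X \<subseteq> {b}" "Y \<subseteq> Z \<Longrightarrow> X \<subseteq> Z \<union> {a}"
    using assms(1,2) by blast+
  with assms(1-4) show ?thesis
    unfolding nested_def by blast
qed

lemma sigma_one_not_inner_edge_of_induced_P4:
  assumes "finite V" and "sigma V E u v = 1"
    and "sigma V E w u > 0" and "sigma V E w v = 0"
    and "sigma V E v x > 0" and "sigma V E u x = 0"
  shows "sigma V E w x > 0"
proof -
  obtain a b where a: "nbhd V E u - nbhd V E v = {a}" and b: "nbhd V E v - nbhd V E u = {b}"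
    using sigma_eq_1_imp_singleton_Diffs[OF assms(1,2)] .
  have "nested (nbhd V E w) (nbhd V E v)" "\<not> nested (nbhd V E w) (nbhd V E u)"
    "nested (nbhd V E u) (nbhd V E x)" "\<not> nested (nbhd V E v) (nbhd V E x)"
    using assms(3-6) by (simp_all add: sigma_eq_0_iff_nested[OF assms(1), symmetric])
  then have "b \<in> nbhd V E w \<and> a \<notin> nbhd V E w" "a \<in> nbhd V E x \<and> b \<notin> nbhd V E x"
    using singleton_Diffs_nested_not_nested a b nested_commute by metis+
  then have "\<not> nested (nbhd V E w) (nbhd V E x)"
    unfolding nested_def by blast
  then show ?thesis
    by (simp add: sigma_eq_0_iff_nested[OF assms(1), symmetric])
qed

lemma factor_induced_path_adj_iff:
  assumes "factor_induced_path V E I p n" and "j \<in> {1..n}" and "k \<in> {1..n}"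
  shows "factor_adj V E I (p j) (p k) \<longleftrightarrow> k = j + 1 \<or> j = k + 1"
  using assms unfolding factor_induced_path_def by blast

lemma factor_induced_path_sigma_pos:
  assumes "factor_induced_path V E I p n" and "1 \<le> j" and "j < n"
  shows "sigma V E (p j) (p (j + 1)) > 0"
  using factor_induced_path_adj_iff[OF assms(1), of j "j + 1"] assms(2,3)
  by (simp add: factor_adj_def)

lemma factor_induced_path_sigma_eq_0:
  assumes "factor_induced_path V E I p n" and "j \<in> {1..n}" and "k \<in> {1..n}"
    and "j \<noteq> k" and "j \<noteq> k + 1" and "k \<noteq> j + 1"
  shows "sigma V E (p j) (p k) = 0"
proof -
  have "p j \<noteq> p k" "p j \<in> I" "p k \<in> I"
    using assms(1-4) by (auto simp: factor_induced_path_def dest: inj_onD)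
  then show ?thesis
    using factor_induced_path_adj_iff[OF assms(1-3)] assms(5,6) by (simp add: factor_adj_def)
qed

theorem corollary4p6:
  fixes V K I :: "'a set" and E :: "'a \<Rightarrow> 'a \<Rightarrow> bool" and p :: "nat \<Rightarrow> 'a" and n i :: nat
  assumes "split_graph V E K I"
    and "n \<ge> 2"
    and "factor_induced_path V E I p n"
    and "i \<in> {1..n-1}"
    and "sigma V E (p i) (p (i+1)) = 1"
  shows "i \<in> {1, n-1}"
proof (rule ccontr)
  assume "i \<notin> {1, n-1}"
  with assms(4) have i: "2 \<le> i" "i + 2 \<le> n"
    by auto
  have "finite V"
    using assms(1) unfolding split_graph_def simple_graph_def by blast
  have "sigma V E (p (i - 1)) (p (i + 2)) > 0"
  proof (rule sigma_one_not_inner_edge_of_induced_P4[OF \<open>finite V\<close> assms(5)])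
    show "sigma V E (p (i - 1)) (p i) > 0"
      using factor_induced_path_sigma_pos[OF assms(3), of "i - 1"] i by simp
    show "sigma V E (p (i + 1)) (p (i + 2)) > 0"
      using factor_induced_path_sigma_pos[OF assms(3), of "i + 1"] i by (simp add: numeral_2_eq_2)
    show "sigma V E (p (i - 1)) (p (i + 1)) = 0" "sigma V E (p i) (p (i + 2)) = 0"
      using i by (auto intro!: factor_induced_path_sigma_eq_0[OF assms(3)])
  qed
  moreover have "sigma V E (p (i - 1)) (p (i + 2)) = 0"
    using i by (auto intro!: factor_induced_path_sigma_eq_0[OF assms(3)])
  ultimately show False
    by simp
qed

end
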